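(* Let $S_0,S_1,S_2,S_3$ be $3$-stars, let $G_0=S_0$ and for $i\in\{1,2,3\}$ let $G_i=G_{i-1}\rhd_{v_{i-1}}S_i$, where $v_{i-1}$ is a vertex of $G_{i-1}$. If $Z=G_3$ has maximum degree at most $3$ and diameter $8$, then $Z$ is unique up to isomorphism.
   Context: A 3-star is $K_{1,3}$. For a graph $G'$, a vertex $v$ of $G'$ and a star $S$, $G'\rhd_v S$ is the graph obtained from the disjoint union of $G'$ and $S$ by identifying $v$ with a leaf of $S$. *)

theory Defs
  imports Main
begin

text \<open>Finite simple graphs as a pair (vertex set, edge set); edges are 2-element sets.\<close>
type_synonym 'a graph = "'a set \<times> 'a set set"

definition verts :: "'a graph \<Rightarrow> 'a set" where "verts G = fst G"
definition edges :: "'a graph \<Rightarrow> 'a set set" where "edges G = snd G"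

definition simple_graph :: "'a graph \<Rightarrow> bool" where
  "simple_graph G \<longleftrightarrow> finite (verts G) \<and>
     (\<forall>e\<in>edges G. \<exists>x y. x \<noteq> y \<and> e = {x, y} \<and> x \<in> verts G \<and> y \<in> verts G)"

definition degree :: "'a graph \<Rightarrow> 'a \<Rightarrow> nat" where
  "degree G v = card {e \<in> edges G. v \<in> e}"

definition max_degree_le :: "'a graph \<Rightarrow> nat \<Rightarrow> bool" where
  "max_degree_le G k \<longleftrightarrow> (\<forall>v\<in>verts G. degree G v \<le> k)"

definition is_star3 :: "'a graph \<Rightarrow> bool" where
  "is_star3 S \<longleftrightarrow> (\<exists>c a b d. distinct [c, a, b, d] \<and> verts S = {c, a, b, d} \<and>
      edges S = {{c, a}, {c, b}, {c, d}})"

text \<open>H is (a copy of) the graph obtained from the disjoint union of G and S by identifying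
  the vertex v of G with a leaf l of S: G and S are embedded injectively into H, their
  images meet exactly in the identified vertex, and H has exactly the images of the vertices
  and edges of G and S.\<close>
definition attach :: "'a graph \<Rightarrow> 'a \<Rightarrow> 's graph \<Rightarrow> 'a graph \<Rightarrow> bool" where
  "attach G v S H \<longleftrightarrow> v \<in> verts G \<and>
     (\<exists>f g l. inj_on f (verts G) \<and> inj_on g (verts S) \<and> l \<in> verts S \<and> degree S l = 1 \<and>
        g l = f v \<and> f ` verts G \<inter> g ` verts S = {f v} \<and>
        verts H = f ` verts G \<union> g ` verts S \<and>
        edges H = (image f) ` edges G \<union> (image g) ` edges S)"

definition star_chain3 :: "'a graph \<Rightarrow> bool" where
  "star_chain3 Z \<longleftrightarrow> (\<exists>(S0::'a graph) (S1::'a graph) (S2::'a graph) (S3::'a graph)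
      (G0::'a graph) G1 G2 v0 v1 v2.
      is_star3 S0 \<and> is_star3 S1 \<and> is_star3 S2 \<and> is_star3 S3 \<and>
      G0 = S0 \<and> attach G0 v0 S1 G1 \<and> attach G1 v1 S2 G2 \<and> attach G2 v2 S3 Z)"

definition walk :: "'a graph \<Rightarrow> 'a list \<Rightarrow> bool" where
  "walk G xs \<longleftrightarrow> xs \<noteq> [] \<and> set xs \<subseteq> verts G \<and>
     (\<forall>i. Suc i < length xs \<longrightarrow> {xs ! i, xs ! Suc i} \<in> edges G)"

definition dist :: "'a graph \<Rightarrow> 'a \<Rightarrow> 'a \<Rightarrow> nat" where
  "dist G u v = (LEAST n. \<exists>xs. walk G xs \<and> hd xs = u \<and> last xs = v \<and> length xs = Suc n)"

definition connected_graph :: "'a graph \<Rightarrow> bool" where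
  "connected_graph G \<longleftrightarrow> (\<forall>u\<in>verts G. \<forall>v\<in>verts G. \<exists>xs. walk G xs \<and> hd xs = u \<and> last xs = v)"

definition diameter :: "'a graph \<Rightarrow> nat" where
  "diameter G = Max {dist G u v | u v. u \<in> verts G \<and> v \<in> verts G}"

definition graph_iso :: "'a graph \<Rightarrow> 'b graph \<Rightarrow> bool" where
  "graph_iso G H \<longleftrightarrow> (\<exists>f. bij_betw f (verts G) (verts H) \<and>
     (\<forall>x\<in>verts G. \<forall>y\<in>verts G. {x, y} \<in> edges G \<longleftrightarrow> {f x, f y} \<in> edges H))"

end

(* Each step G_i = G_(i-1) |>_v S_i adds a new centre joined to the attachment vertex v
   together with two new leaves.  Hence, after relabelling, Z is the tree on {0..12} in which
   vertex i + 1 hangs below its parent p_i, with parent list [0,1,1,v0,4,4,v1,7,7,v2,10,10]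
   and v0 <= 3, v1 <= 6, v2 <= 9.  Degrees and the diameter are isomorphism invariants, so only
   these 280 labelled trees matter.  Those of maximum degree at most 3 either have a vertex at
   distance at most 3 from all others, and so diameter at most 6, or are isomorphic to the tree
   with (v0, v1, v2) = (2, 5, 8); both kinds of witness are checked by evaluation. *)

theory Submission
  imports Defs
begin

section \<open>Walks and distances\<close>

definition within_dist :: "'a graph \<Rightarrow> nat \<Rightarrow> 'a \<Rightarrow> 'a \<Rightarrow> bool" where
  "within_dist G k u v \<longleftrightarrow> (\<exists>xs. walk G xs \<and> hd xs = u \<and> last xs = v \<and> length xs \<le> Suc k)"

lemma walk_Cons:
  "walk G (x # xs) \<longleftrightarrow> x \<in> verts G \<and> (xs = [] \<or> {x, hd xs} \<in> edges G \<and> walk G xs)"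
proof (cases xs)
  case (Cons y ys)
  have "(\<forall>i. Suc i < length (x # xs) \<longrightarrow> {(x # xs) ! i, (x # xs) ! Suc i} \<in> edges G) \<longleftrightarrow>
        {x, y} \<in> edges G \<and> (\<forall>i. Suc i < length xs \<longrightarrow> {xs ! i, xs ! Suc i} \<in> edges G)"
    using Cons by (auto simp: All_less_Suc2)
  then show ?thesis
    using Cons by (auto simp: walk_def)
qed (simp add: walk_def)

lemma walk_append:
  assumes "walk G xs" "walk G ys" "last xs = hd ys"
  shows "walk G (xs @ tl ys)"
  using assms
proof (induction xs)
  case (Cons x xs)
  then show ?case
    by (cases xs; cases ys) (auto simp: walk_Cons)
qed (simp add: walk_def)

lemma walk_rev: "walk G xs \<Longrightarrow> walk G (rev xs)"
proof (induction xs)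
  case (Cons x xs)
  show ?case
  proof (cases xs)
    case Nil
    with Cons.prems show ?thesis by simp
  next
    case (Cons y ys)
    with Cons.prems have "walk G (rev xs)" "walk G [y, x]"
      using Cons.IH by (auto simp: walk_Cons insert_commute)
    from walk_append[OF this] show ?thesis
      using Cons by simp
  qed
qed (simp add: walk_def)

lemma within_dist_refl: "u \<in> verts G \<Longrightarrow> within_dist G 0 u u"
  unfolding within_dist_def by (rule exI[of _ "[u]"]) (simp add: walk_Cons)

lemma within_dist_edge:
  "{u, v} \<in> edges G \<Longrightarrow> u \<in> verts G \<Longrightarrow> v \<in> verts G \<Longrightarrow> within_dist G 1 u v"
  unfolding within_dist_def by (rule exI[of _ "[u, v]"]) (simp add: walk_Cons)

lemma within_dist_mono: "within_dist G k u v \<Longrightarrow> k \<le> l \<Longrightarrow> within_dist G l u v"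
  unfolding within_dist_def by fastforce

lemma within_dist_sym: "within_dist G k u v \<Longrightarrow> within_dist G k v u"
  unfolding within_dist_def by (metis walk_rev hd_rev last_rev length_rev)

lemma within_dist_trans:
  assumes "within_dist G k u v" "within_dist G l v w"
  shows "within_dist G (k + l) u w"
proof -
  obtain xs ys where xs: "walk G xs" "hd xs = u" "last xs = v" "length xs \<le> Suc k"
    and ys: "walk G ys" "hd ys = v" "last ys = w" "length ys \<le> Suc l"
    using assms unfolding within_dist_def by blast
  have "xs \<noteq> []" "ys \<noteq> []"
    using xs ys by (auto simp: walk_def)
  then show ?thesis
    unfolding within_dist_def using xs ys walk_append[OF xs(1) ys(1)]
    by (intro exI[of _ "xs @ tl ys"]) (cases ys, auto simp: last_append)
qed

lemma dist_le_if_within_dist: "within_dist G k u v \<Longrightarrow> dist G u v \<le> k"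
proof -
  assume "within_dist G k u v"
  then obtain xs where xs: "walk G xs" "hd xs = u" "last xs = v" "length xs \<le> Suc k"
    unfolding within_dist_def by blast
  then have "length xs = Suc (length xs - 1)"
    by (cases xs) (auto simp: walk_def)
  then have "dist G u v \<le> length xs - 1"
    unfolding dist_def using xs by (intro Least_le) metis
  with xs show ?thesis by simp
qed

lemma diameter_le_if_centre:
  assumes "finite (verts G)" "c \<in> verts G" "\<forall>u\<in>verts G. within_dist G r c u"
  shows "diameter G \<le> 2 * r"
  unfolding diameter_def
proof (rule Max.boundedI)
  show "finite {dist G u v |u v. u \<in> verts G \<and> v \<in> verts G}"
    using assms(1) by (intro finite_image_set2) simp_all
  show "{dist G u v |u v. u \<in> verts G \<and> v \<in> verts G} \<noteq> {}"
    using assms(2) by blast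
  have "dist G u v \<le> 2 * r" if "u \<in> verts G" "v \<in> verts G" for u v
    using within_dist_trans[OF within_dist_sym] assms(3) that
    by (metis dist_le_if_within_dist mult_2)
  then show "\<And>d. d \<in> {dist G u v |u v. u \<in> verts G \<and> v \<in> verts G} \<Longrightarrow> d \<le> 2 * r"
    by blast
qed

section \<open>Isomorphisms\<close>

text \<open>The graph type does not force \<^term>\<open>edges G \<subseteq> Pow (verts G)\<close>; requiring it makes
  \<^term>\<open>image f\<close> injective on edges.\<close>

definition iso_betw :: "('a \<Rightarrow> 'b) \<Rightarrow> 'a graph \<Rightarrow> 'b graph \<Rightarrow> bool" where
  "iso_betw f G H \<longleftrightarrow> bij_betw f (verts G) (verts H) \<and> edges G \<subseteq> Pow (verts G) \<and>
     image f ` edges G = edges H"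

lemma iso_betw_edges_subset:
  assumes "iso_betw f G H"
  shows "edges H \<subseteq> Pow (verts H)"
proof -
  have V: "f ` verts G = verts H" and E: "edges G \<subseteq> Pow (verts G)"
    and fE: "edges H = image f ` edges G"
    using assms by (simp_all add: iso_betw_def bij_betw_def)
  show ?thesis
    unfolding fE V[symmetric] using E by (auto intro: image_mono)
qed

lemma iso_betw_comp:
  assumes "iso_betw f G H" "iso_betw g H K"
  shows "iso_betw (g \<circ> f) G K"
  unfolding iso_betw_def
proof (intro conjI)
  have "bij_betw f (verts G) (verts H)" "bij_betw g (verts H) (verts K)"
    using assms unfolding iso_betw_def by auto
  then show "bij_betw (g \<circ> f) (verts G) (verts K)"
    by (rule bij_betw_trans)
  show "edges G \<subseteq> Pow (verts G)"
    using assms(1) unfolding iso_betw_def by simp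
  have "image (g \<circ> f) ` edges G = image g ` image f ` edges G"
    by (simp add: image_comp)
  then show "image (g \<circ> f) ` edges G = edges K"
    using assms unfolding iso_betw_def by simp
qed

lemma iso_betw_inv:
  assumes "iso_betw f G H"
  shows "iso_betw (inv_into (verts G) f) H G"
proof -
  have bij: "bij_betw f (verts G) (verts H)" and E: "edges G \<subseteq> Pow (verts G)"
    and fE: "image f ` edges G = edges H"
    using assms unfolding iso_betw_def by auto
  have "inv_into (verts G) f ` f ` e = e" if "e \<in> edges G" for e
    using inv_into_image_cancel[OF bij_betw_imp_inj_on[OF bij]] E that by blast
  then have "image (inv_into (verts G) f) ` image f ` edges G = edges G"
    by (simp add: image_image)
  then show ?thesis
    using bij_betw_inv_into[OF bij] iso_betw_edges_subset[OF assms] fE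
    unfolding iso_betw_def by simp
qed

lemma iso_betw_edge_iff:
  assumes "iso_betw f G H" "x \<in> verts G" "y \<in> verts G"
  shows "{f x, f y} \<in> edges H \<longleftrightarrow> {x, y} \<in> edges G"
proof -
  have inj: "inj_on (image f) (Pow (verts G))" and E: "edges G \<subseteq> Pow (verts G)"
    and fE: "image f ` edges G = edges H"
    using assms(1) unfolding iso_betw_def bij_betw_def by (auto intro: inj_on_image_Pow)
  have "{f x, f y} \<in> edges H \<longleftrightarrow> f ` {x, y} \<in> image f ` edges G"
    using fE by simp
  also have "\<dots> \<longleftrightarrow> {x, y} \<in> edges G"
    using assms(2,3) by (intro inj_on_image_mem_iff[OF inj _ E]) simp
  finally show ?thesis .
qed

lemma graph_iso_if_iso_betw:
  assumes "iso_betw f G H"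
  shows "graph_iso G H"
  unfolding graph_iso_def
proof (intro exI[of _ f] conjI ballI)
  show "bij_betw f (verts G) (verts H)"
    using assms unfolding iso_betw_def by simp
  show "{x, y} \<in> edges G \<longleftrightarrow> {f x, f y} \<in> edges H" if "x \<in> verts G" "y \<in> verts G" for x y
    using iso_betw_edge_iff[OF assms that] by simp
qed

lemma degree_iso_betw:
  assumes "iso_betw f G H" "x \<in> verts G"
  shows "degree H (f x) = degree G x"
proof -
  have inj: "inj_on f (verts G)" and E: "edges G \<subseteq> Pow (verts G)"
    and fE: "image f ` edges G = edges H"
    using assms(1) unfolding iso_betw_def bij_betw_def by auto
  have mem: "f x \<in> f ` e \<longleftrightarrow> x \<in> e" if "e \<in> edges G" for e
    using inj_on_image_mem_iff[OF inj assms(2)] E that by blast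
  have "{e \<in> image f ` edges G. f x \<in> e} = image f ` {e \<in> edges G. x \<in> e}"
    using mem by blast
  then have "{e \<in> edges H. f x \<in> e} = image f ` {e \<in> edges G. x \<in> e}"
    unfolding fE .
  moreover have "inj_on (image f) {e \<in> edges G. x \<in> e}"
    using inj_on_image_Pow[OF inj] E by (blast intro: inj_on_subset)
  ultimately show ?thesis
    unfolding degree_def by (simp add: card_image)
qed

lemma max_degree_le_iso_betw:
  assumes "iso_betw f G H" "max_degree_le G d"
  shows "max_degree_le H d"
  unfolding max_degree_le_def
proof
  fix y assume "y \<in> verts H"
  then obtain x where "x \<in> verts G" "y = f x"
    using assms(1) unfolding iso_betw_def bij_betw_def by blast
  then show "degree H y \<le> d"
    using assms degree_iso_betw unfolding max_degree_le_def by metis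
qed

lemma walk_iso_betw:
  assumes "iso_betw f G H" "walk G xs"
  shows "walk H (map f xs)"
proof -
  have "{f a, f b} \<in> edges H" if "{a, b} \<in> edges G" for a b
  proof -
    have "f ` {a, b} \<in> image f ` edges G"
      using that by (rule imageI)
    then show ?thesis
      using assms(1) unfolding iso_betw_def by simp
  qed
  moreover have "f x \<in> verts H" if "x \<in> verts G" for x
    using assms(1) that unfolding iso_betw_def bij_betw_def by blast
  ultimately show ?thesis
    using assms(2) unfolding walk_def by auto
qed

lemma walk_between_iso_betw:
  assumes "iso_betw f G H" "\<exists>xs. walk G xs \<and> hd xs = u \<and> last xs = v \<and> length xs = n"
  shows "\<exists>ys. walk H ys \<and> hd ys = f u \<and> last ys = f v \<and> length ys = n"
proof -
  obtain xs where xs: "walk G xs" "hd xs = u" "last xs = v" "length xs = n"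
    using assms(2) by blast
  then have "walk H (map f xs)" "hd (map f xs) = f u" "last (map f xs) = f v"
    using walk_iso_betw[OF assms(1) xs(1)] by (auto simp: walk_def hd_map last_map)
  with xs(4) show ?thesis
    by (intro exI[of _ "map f xs"]) simp
qed

lemma dist_iso_betw:
  assumes f: "iso_betw f G H" and "u \<in> verts G" "v \<in> verts G"
  shows "dist H (f u) (f v) = dist G u v"
proof -
  let ?g = "inv_into (verts G) f"
  have gf: "?g (f u) = u" "?g (f v) = v"
    using assms f unfolding iso_betw_def bij_betw_def by auto
  have "(\<exists>ys. walk H ys \<and> hd ys = f u \<and> last ys = f v \<and> length ys = Suc n) \<longleftrightarrow>
        (\<exists>xs. walk G xs \<and> hd xs = u \<and> last xs = v \<and> length xs = Suc n)" for n
    using walk_between_iso_betw[OF f, of u v] walk_between_iso_betw[OF iso_betw_inv[OF f], of "f u" "f v"]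
    unfolding gf by blast
  then show ?thesis
    unfolding dist_def by simp
qed

lemma diameter_iso_betw:
  assumes "iso_betw f G H"
  shows "diameter H = diameter G"
proof -
  have V: "verts H = f ` verts G"
    using assms unfolding iso_betw_def bij_betw_def by simp
  have "{dist H u v |u v. u \<in> verts H \<and> v \<in> verts H} =
        {dist G u v |u v. u \<in> verts G \<and> v \<in> verts G}"
  proof (intro equalityI subsetI)
    fix d assume "d \<in> {dist H u v |u v. u \<in> verts H \<and> v \<in> verts H}"
    then obtain u v where "d = dist H (f u) (f v)" "u \<in> verts G" "v \<in> verts G"
      unfolding V by blast
    then show "d \<in> {dist G u v |u v. u \<in> verts G \<and> v \<in> verts G}"
      using dist_iso_betw[OF assms] by auto
  next
    fix d assume "d \<in> {dist G u v |u v. u \<in> verts G \<and> v \<in> verts G}"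
    then obtain u v where "d = dist G u v" "u \<in> verts G" "v \<in> verts G"
      by blast
    then have "d = dist H (f u) (f v)" "f u \<in> verts H" "f v \<in> verts H"
      using dist_iso_betw[OF assms] V by auto
    then show "d \<in> {dist H u v |u v. u \<in> verts H \<and> v \<in> verts H}"
      by blast
  qed
  then show ?thesis
    unfolding diameter_def by simp
qed

section \<open>Attaching stars\<close>

definition add_star :: "'a graph \<Rightarrow> 'a \<Rightarrow> 'a \<Rightarrow> 'a \<Rightarrow> 'a \<Rightarrow> 'a graph" where
  "add_star G v c b d = (verts G \<union> {c, b, d}, edges G \<union> {{v, c}, {c, b}, {c, d}})"

lemma verts_add_star [simp]: "verts (add_star G v c b d) = verts G \<union> {c, b, d}"
  and edges_add_star [simp]: "edges (add_star G v c b d) = edges G \<union> {{v, c}, {c, b}, {c, d}}"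
  by (simp_all add: add_star_def verts_def edges_def)

lemma iso_betw_image_graph:
  assumes "inj_on f (verts G)" "edges G \<subseteq> Pow (verts G)"
  shows "iso_betw f G (f ` verts G, image f ` edges G)"
  using assms inj_on_imp_bij_betw[OF assms(1)] unfolding iso_betw_def by (simp add: verts_def edges_def)

lemma iso_betw_add_star:
  assumes h: "iso_betw h G G'" and v: "v \<in> verts G"
    and new: "distinct [c, b, d]" "{c, b, d} \<inter> verts G = {}"
    and new': "distinct [c', b', d']" "{c', b', d'} \<inter> verts G' = {}"
  shows "iso_betw (h(c := c', b := b', d := d')) (add_star G v c b d) (add_star G' (h v) c' b' d')"
proof -
  define k where "k = h(c := c', b := b', d := d')"
  have k_old: "k x = h x" if "x \<in> verts G" for x
    using that new(2) unfolding k_def by auto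
  have k_new: "k c = c'" "k b = b'" "k d = d'"
    using new(1) unfolding k_def by auto
  have bij: "bij_betw h (verts G) (verts G')" and E: "edges G \<subseteq> Pow (verts G)"
    and hE: "image h ` edges G = edges G'"
    using h unfolding iso_betw_def by auto
  have "bij_betw k (verts G) (verts G')"
    using bij bij_betw_cong[of "verts G" k h] k_old by simp
  moreover have "bij_betw k {c, b, d} {c', b', d'}"
    using new(1) new'(1) k_new unfolding bij_betw_def inj_on_def by auto
  ultimately have "bij_betw k (verts G \<union> {c, b, d}) (verts G' \<union> {c', b', d'})"
    using new'(2) by (intro bij_betw_combine) blast+
  moreover have "edges G \<union> {{v, c}, {c, b}, {c, d}} \<subseteq> Pow (verts G \<union> {c, b, d})"
    using E v by blast
  moreover have "image k ` edges G = edges G'"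
  proof -
    have "k ` e = h ` e" if "e \<in> edges G" for e
    proof (rule image_cong[OF refl])
      show "k x = h x" if "x \<in> e" for x
        using \<open>e \<in> edges G\<close> that E k_old by blast
    qed
    then show ?thesis
      using hE by (simp cong: image_cong)
  qed
  ultimately show ?thesis
    unfolding iso_betw_def k_def[symmetric] by (simp add: image_Un k_old[OF v] k_new)
qed

lemma eq_add_star_singleton_iff:
  "S = add_star ({l}, {}) l c b d \<longleftrightarrow>
     verts S = {l, c, b, d} \<and> edges S = {{l, c}, {c, b}, {c, d}}"
  by (auto simp: add_star_def verts_def edges_def prod_eq_iff)

lemma is_star3_obtain_leaves:
  assumes "is_star3 S"
  obtains c L where "c \<notin> L" "card L = 3" "verts S = insert c L" "edges S = (\<lambda>z. {c, z}) ` L"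
proof -
  obtain c a b d where "distinct [c, a, b, d]" "verts S = {c, a, b, d}"
    "edges S = {{c, a}, {c, b}, {c, d}}"
    using assms unfolding is_star3_def by (elim exE conjE) (rule that)
  then show thesis
    by (intro that[of c "{a, b, d}"]) auto
qed

lemma star_eq_add_star_at_leaf:
  assumes "c \<notin> L" "card L = 3" "l \<in> L" "verts S = insert c L" "edges S = (\<lambda>z. {c, z}) ` L"
  shows "\<exists>x y. distinct [l, c, x, y] \<and> S = add_star ({l}, {}) l c x y"
proof -
  have "card (L - {l}) = 2"
    using assms(2,3) by simp
  then obtain x y where xy: "L - {l} = {x, y}" "x \<noteq> y"
    by (auto simp: card_2_iff)
  then have L: "L = {l, x, y}"
    using assms(3) by blast
  have "distinct [l, c, x, y]"
    using assms(1) xy L by auto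
  moreover have "verts S = {l, c, x, y}"
    using assms(4) L by blast
  moreover have "edges S = {{l, c}, {c, x}, {c, y}}"
    using assms(5) L by (simp add: insert_commute)
  ultimately show ?thesis
    unfolding eq_add_star_singleton_iff by blast
qed

lemma is_star3_add_star:
  assumes "is_star3 S"
  shows "\<exists>l c b d. distinct [l, c, b, d] \<and> S = add_star ({l}, {}) l c b d"
proof -
  obtain c L where L: "c \<notin> L" "card L = 3" "verts S = insert c L" "edges S = (\<lambda>z. {c, z}) ` L"
    using is_star3_obtain_leaves[OF assms] .
  then obtain l where "l \<in> L"
    by fastforce
  from star_eq_add_star_at_leaf[OF L(1,2) this L(3,4)] show ?thesis
    by blast
qed

lemma is_star3_add_star_at_leaf:
  assumes "is_star3 S" "l \<in> verts S" "degree S l = 1"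
  shows "\<exists>c b d. distinct [l, c, b, d] \<and> S = add_star ({l}, {}) l c b d"
proof -
  obtain c L where L: "c \<notin> L" "card L = 3" "verts S = insert c L" "edges S = (\<lambda>z. {c, z}) ` L"
    using is_star3_obtain_leaves[OF assms(1)] .
  have "inj_on (\<lambda>z. {c, z}) L"
    by (rule inj_onI) (auto simp: doubleton_eq_iff)
  moreover have "{e \<in> edges S. c \<in> e} = (\<lambda>z. {c, z}) ` L"
    using L(4) by auto
  ultimately have "degree S c = 3"
    unfolding degree_def using L(2) by (simp add: card_image)
  then have "l \<in> L"
    using assms(2,3) L(3) by auto
  from star_eq_add_star_at_leaf[OF L(1,2) this L(3,4)] show ?thesis
    by blast
qed

lemma Int_image_Diff_eq_empty:
  assumes "inj_on g A" "l \<in> A" "B \<inter> g ` A = {g l}"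
  shows "B \<inter> g ` (A - {l}) = {}"
  using assms unfolding inj_on_def by blast

lemma attach_star3_add_star:
  assumes "attach G v S H" "is_star3 S" "edges G \<subseteq> Pow (verts G)"
  obtains f c b d where "inj_on f (verts G)" "distinct [c, b, d]" "{c, b, d} \<inter> f ` verts G = {}"
    "H = add_star (f ` verts G, image f ` edges G) (f v) c b d"
proof -
  have v: "v \<in> verts G"
    using assms(1) unfolding attach_def by blast
  obtain f g l where f: "inj_on f (verts G)" and g: "inj_on g (verts S)" and l: "l \<in> verts S"
    "degree S l = 1" "g l = f v" and meet: "f ` verts G \<inter> g ` verts S = {f v}"
    and VH: "verts H = f ` verts G \<union> g ` verts S"
    and EH: "edges H = image f ` edges G \<union> image g ` edges S"
    using assms(1) unfolding attach_def by (elim exE conjE) (rule that)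
  obtain c b d where dist: "distinct [l, c, b, d]" and S: "S = add_star ({l}, {}) l c b d"
    using is_star3_add_star_at_leaf[OF assms(2) l(1,2)] by blast
  have VS: "verts S = {l, c, b, d}" and ES: "edges S = {{l, c}, {c, b}, {c, d}}"
    using S unfolding eq_add_star_singleton_iff by auto
  have "distinct [g c, g b, g d]"
    using g dist unfolding VS inj_on_def by auto
  moreover have "{g c, g b, g d} \<inter> f ` verts G = {}"
  proof -
    have "f ` verts G \<inter> g ` (verts S - {l}) = {}"
      using Int_image_Diff_eq_empty[OF g l(1)] meet l(3) by simp
    moreover have "verts S - {l} = {c, b, d}"
      using dist VS by auto
    ultimately show ?thesis
      by auto
  qed
  moreover have "H = add_star (f ` verts G, image f ` edges G) (f v) (g c) (g b) (g d)"
  proof -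
    have "verts H = f ` verts G \<union> {g c, g b, g d}"
      using VH v l(3) unfolding VS by auto
    moreover have "edges H = image f ` edges G \<union> {{f v, g c}, {g c, g b}, {g c, g d}}"
      using EH l(3) unfolding ES by simp
    ultimately show ?thesis
      unfolding add_star_def verts_def edges_def by (simp add: prod_eq_iff)
  qed
  ultimately show ?thesis
    using that f by blast
qed

lemma attach_iso_betw_add_star:
  assumes "attach G v S H" "is_star3 S" "iso_betw h G G'"
    and "distinct [c', b', d']" "{c', b', d'} \<inter> verts G' = {}"
  shows "\<exists>k. iso_betw k H (add_star G' (h v) c' b' d')"
proof -
  have v: "v \<in> verts G"
    using assms(1) unfolding attach_def by blast
  have E: "edges G \<subseteq> Pow (verts G)"
    using assms(3) unfolding iso_betw_def by blast
  obtain f c b d where f: "inj_on f (verts G)" and new: "distinct [c, b, d]"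
    "{c, b, d} \<inter> f ` verts G = {}"
    and H: "H = add_star (f ` verts G, image f ` edges G) (f v) c b d"
    using attach_star3_add_star[OF assms(1,2) E] .
  let ?F = "(f ` verts G, image f ` edges G)"
  have VF: "verts ?F = f ` verts G"
    by (simp add: verts_def)
  have iso_F: "iso_betw (h \<circ> inv_into (verts G) f) ?F G'"
    using iso_betw_comp[OF iso_betw_inv[OF iso_betw_image_graph[OF f E]] assms(3)] by simp
  have fv: "f v \<in> verts ?F" and fresh: "{c, b, d} \<inter> verts ?F = {}"
    using v new(2) unfolding VF by auto
  have "(h \<circ> inv_into (verts G) f) (f v) = h v"
    using f v by simp
  with iso_betw_add_star[OF iso_F fv new(1) fresh assms(4,5), folded H] show ?thesis
    by auto
qed

section \<open>Labelled trees\<close>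

definition tree_graph :: "nat list \<Rightarrow> nat graph" where
  "tree_graph ps = ({0..length ps}, (\<lambda>i. {ps ! i, Suc i}) ` {..<length ps})"

lemma verts_tree_graph [simp]: "verts (tree_graph ps) = {0..length ps}"
  and edges_tree_graph: "edges (tree_graph ps) = (\<lambda>i. {ps ! i, Suc i}) ` {..<length ps}"
  by (simp_all add: tree_graph_def verts_def edges_def)

lemma tree_graph_append_star:
  assumes "n = Suc (length ps)"
  shows "tree_graph (ps @ [p, n, n]) = add_star (tree_graph ps) p n (Suc n) (Suc (Suc n))"
proof -
  let ?qs = "ps @ [p, n, n]"
  have V: "{0..length ?qs} = {0..length ps} \<union> {n, Suc n, Suc (Suc n)}"
    using assms by auto
  have "{..<length ?qs} = {..<length ps} \<union> {length ps, n, Suc n}"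
    using assms by auto
  moreover have "(\<lambda>i. {?qs ! i, Suc i}) ` {..<length ps} = (\<lambda>i. {ps ! i, Suc i}) ` {..<length ps}"
    by (rule image_cong) (simp_all add: nth_append)
  ultimately have E: "(\<lambda>i. {?qs ! i, Suc i}) ` {..<length ?qs} =
    (\<lambda>i. {ps ! i, Suc i}) ` {..<length ps} \<union> {{p, n}, {n, Suc n}, {n, Suc (Suc n)}}"
    using assms by (simp add: nth_append)
  show ?thesis
    unfolding tree_graph_def add_star_def verts_def edges_def fst_conv snd_conv V E ..
qed

lemma is_star3_iso_betw_tree_graph:
  assumes "is_star3 S"
  shows "\<exists>h. iso_betw h S (tree_graph [0, 1, 1])"
proof -
  obtain l c b d where dist: "distinct [l, c, b, d]" and S: "S = add_star ({l}, {}) l c b d"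
    using is_star3_add_star[OF assms] by blast
  have "iso_betw (\<lambda>_. 0) ({l}, {}) (tree_graph [])"
    by (simp add: iso_betw_def tree_graph_def verts_def edges_def bij_betw_def)
  from iso_betw_add_star[OF this, of l c b d 1 2 3]
  have "iso_betw ((\<lambda>_. 0)(c := 1, b := 2, d := 3)) S (add_star (tree_graph []) 0 1 2 3)"
    using dist unfolding S by (simp add: verts_def tree_graph_def)
  moreover have "tree_graph [0, 1, 1] = add_star (tree_graph []) 0 1 2 3"
    using tree_graph_append_star[of 1 "[]" 0] by (simp add: numeral_2_eq_2 numeral_3_eq_3)
  ultimately show ?thesis
    by auto
qed

lemma attach_iso_betw_tree_graph:
  assumes "attach G v S H" "is_star3 S" "iso_betw h G (tree_graph ps)"
    and "n = Suc (length ps)" "qs = ps @ [h v, n, n]"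
  obtains k where "h v < n" "iso_betw k H (tree_graph qs)"
proof -
  have "v \<in> verts G"
    using assms(1) unfolding attach_def by blast
  then have "h v \<in> verts (tree_graph ps)"
    using assms(3) unfolding iso_betw_def bij_betw_def by blast
  then have "h v < n"
    using assms(4) by simp
  have "distinct [n, Suc n, Suc (Suc n)]" "{n, Suc n, Suc (Suc n)} \<inter> verts (tree_graph ps) = {}"
    using assms(4) by auto
  from attach_iso_betw_add_star[OF assms(1-3) this]
  obtain k where "iso_betw k H (tree_graph qs)"
    unfolding assms(5) tree_graph_append_star[OF assms(4)] by blast
  with \<open>h v < n\<close> show thesis
    by (rule that)
qed

text \<open>The star \<open>S\<^sub>0\<close> gets the chosen leaf 0, centre 1 and leaves 2, 3; the star attached
  at the vertex labelled \<open>v\<^sub>i\<close> gets centre \<open>3i + 4\<close> and leaves \<open>3i + 5\<close>, \<open>3i + 6\<close>.\<close>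

definition chain_parents :: "nat \<Rightarrow> nat \<Rightarrow> nat \<Rightarrow> nat list" where
  "chain_parents v0 v1 v2 = [0, 1, 1, v0, 4, 4, v1, 7, 7, v2, 10, 10]"

lemma star_chain3_iso_betw_tree_graph:
  assumes "star_chain3 Z"
  obtains v0 v1 v2 k where "v0 \<le> 3" "v1 \<le> 6" "v2 \<le> 9"
    "iso_betw k Z (tree_graph (chain_parents v0 v1 v2))"
proof -
  obtain S0 S1 S2 S3 G0 G1 G2 :: "'a graph" and v0 v1 v2 where
    S: "is_star3 S0" "is_star3 S1" "is_star3 S2" "is_star3 S3" and "G0 = S0" and
    G: "attach G0 v0 S1 G1" "attach G1 v1 S2 G2" "attach G2 v2 S3 Z"
    using assms unfolding star_chain3_def by (elim exE conjE) (rule that)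
  obtain h0 where h0: "iso_betw h0 G0 (tree_graph [0, 1, 1])"
    using is_star3_iso_betw_tree_graph[OF S(1)] \<open>G0 = S0\<close> by blast
  obtain h1 where v0: "h0 v0 < 4" and h1: "iso_betw h1 G1 (tree_graph [0, 1, 1, h0 v0, 4, 4])"
    by (rule attach_iso_betw_tree_graph[OF G(1) S(2) h0, where n = 4]) simp_all
  obtain h2 where v1: "h1 v1 < 7"
    and h2: "iso_betw h2 G2 (tree_graph [0, 1, 1, h0 v0, 4, 4, h1 v1, 7, 7])"
    by (rule attach_iso_betw_tree_graph[OF G(2) S(3) h1, where n = 7]) simp_all
  obtain h3 where v2: "h2 v2 < 10"
    and "iso_betw h3 Z (tree_graph (chain_parents (h0 v0) (h1 v1) (h2 v2)))"
    by (rule attach_iso_betw_tree_graph[OF G(3) S(4) h2, where n = 10])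
      (simp_all add: chain_parents_def)
  with v0 v1 v2 show thesis
    by (intro that) simp_all
qed

definition is_parent_list :: "nat list \<Rightarrow> bool" where
  "is_parent_list ps \<longleftrightarrow> (\<forall>i<length ps. ps ! i \<le> i)"

lemma is_parent_list_chain_parents:
  "v0 \<le> 3 \<Longrightarrow> v1 \<le> 6 \<Longrightarrow> v2 \<le> 9 \<Longrightarrow> is_parent_list (chain_parents v0 v1 v2)"
  unfolding is_parent_list_def chain_parents_def by (auto simp: less_Suc_eq numeral_eq_Suc)

lemma tree_graph_edges_subset:
  assumes "is_parent_list ps"
  shows "edges (tree_graph ps) \<subseteq> Pow (verts (tree_graph ps))"
proof
  fix e assume "e \<in> edges (tree_graph ps)"
  then obtain i where "i < length ps" "e = {ps ! i, Suc i}"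
    unfolding edges_tree_graph by blast
  moreover have "ps ! i \<le> i"
    using assms calculation(1) unfolding is_parent_list_def by blast
  ultimately show "e \<in> Pow (verts (tree_graph ps))"
    by auto
qed

definition tree_degree :: "nat list \<Rightarrow> nat \<Rightarrow> nat" where
  "tree_degree ps x = count_list ps x + (if x = 0 then 0 else 1)"

lemma degree_tree_graph:
  assumes ps: "is_parent_list ps" and x: "x \<le> length ps"
  shows "degree (tree_graph ps) x = tree_degree ps x"
proof -
  let ?e = "\<lambda>i. {ps ! i, Suc i}"
  let ?C = "{i. i < length ps \<and> x = ps ! i}" and ?P = "{i. i < length ps \<and> Suc i = x}"
  have below: "ps ! i \<le> i" if "i < length ps" for i
    using ps that unfolding is_parent_list_def by blast
  have "inj_on ?e {..<length ps}"
  proof (rule inj_onI)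
    fix i j assume "i \<in> {..<length ps}" "j \<in> {..<length ps}" "?e i = ?e j"
    with below[of i] below[of j] show "i = j"
      by (auto simp: doubleton_eq_iff)
  qed
  then have inj: "inj_on ?e (?C \<union> ?P)"
    by (rule inj_on_subset) auto
  have "{d \<in> edges (tree_graph ps). x \<in> d} = ?e ` (?C \<union> ?P)"
    unfolding edges_tree_graph by auto
  then have "degree (tree_graph ps) x = card (?C \<union> ?P)"
    unfolding degree_def using inj by (simp add: card_image)
  also have "\<dots> = card ?C + card ?P"
    using below by (intro card_Un_disjoint) fastforce+
  also have "card ?C = count_list ps x"
    by (simp add: count_list_eq_length_filter length_filter_conv_card)
  also have "?P = (if x = 0 then {} else {x - 1})"
    using x by auto
  finally show ?thesis
    unfolding tree_degree_def by simp
qed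

lemma max_degree_le_tree_graph:
  assumes "is_parent_list ps"
  shows "max_degree_le (tree_graph ps) d \<longleftrightarrow> (\<forall>x\<in>set [0..<Suc (length ps)]. tree_degree ps x \<le> d)"
  unfolding max_degree_le_def using degree_tree_graph[OF assms] by auto

fun uedge :: "'a \<times> 'a \<Rightarrow> 'a set" where
  "uedge (a, b) = {a, b}"

definition neighbours :: "('a \<times> 'a) list \<Rightarrow> 'a \<Rightarrow> 'a list" where
  "neighbours es x = [b. (a, b) \<leftarrow> es, a = x] @ [a. (a, b) \<leftarrow> es, b = x]"

fun ball :: "('a \<times> 'a) list \<Rightarrow> nat \<Rightarrow> 'a \<Rightarrow> 'a list" where
  "ball es 0 u = [u]"
| "ball es (Suc k) u = remdups (concat (map (\<lambda>x. x # neighbours es x) (ball es k u)))"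

lemma centre_mem_ball: "u \<in> set (ball es k u)"
  by (induction k) auto

lemma within_dist_if_mem_ball:
  assumes "edges G \<subseteq> Pow (verts G)" "uedge ` set es \<subseteq> edges G" "u \<in> verts G"
  shows "y \<in> set (ball es k u) \<Longrightarrow> within_dist G k u y"
proof (induction k arbitrary: y)
  case 0
  then show ?case
    using within_dist_refl[OF assms(3)] by simp
next
  case (Suc k)
  then obtain x where x: "x \<in> set (ball es k u)" and "y = x \<or> y \<in> set (neighbours es x)"
    by auto
  then consider "y = x" | "(x, y) \<in> set es \<or> (y, x) \<in> set es"
    unfolding neighbours_def by auto
  then show ?case
  proof cases
    case 1
    then show ?thesis
      using within_dist_mono[OF Suc.IH[OF x]] by simp
  next
    case 2
    then have "uedge (x, y) \<in> edges G \<or> uedge (y, x) \<in> edges G"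
      using assms(2) by blast
    then have "{x, y} \<in> edges G"
      by (auto simp: insert_commute)
    then have "within_dist G 1 x y"
      using assms(1) by (intro within_dist_edge) auto
    from within_dist_trans[OF Suc.IH[OF x] this] show ?thesis
      by simp
  qed
qed

definition tree_edges :: "nat list \<Rightarrow> (nat \<times> nat) list" where
  "tree_edges ps = map (\<lambda>i. (ps ! i, Suc i)) [0..<length ps]"

lemma edges_tree_graph_tree_edges: "edges (tree_graph ps) = uedge ` set (tree_edges ps)"
  by (simp add: edges_tree_graph tree_edges_def image_image atLeast0LessThan)

lemma diameter_tree_graph_le:
  assumes ps: "is_parent_list ps" and ball: "set (ball (tree_edges ps) r a) = verts (tree_graph ps)"
  shows "diameter (tree_graph ps) \<le> 2 * r"
proof -
  have a: "a \<in> verts (tree_graph ps)"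
    using centre_mem_ball[of a "tree_edges ps" r] unfolding ball .
  have edges: "uedge ` set (tree_edges ps) \<subseteq> edges (tree_graph ps)"
    unfolding edges_tree_graph_tree_edges ..
  have "\<forall>u\<in>verts (tree_graph ps). within_dist (tree_graph ps) r a u"
  proof
    fix u assume "u \<in> verts (tree_graph ps)"
    then have "u \<in> set (ball (tree_edges ps) r a)"
      unfolding ball .
    from within_dist_if_mem_ball[OF tree_graph_edges_subset[OF ps] edges a this]
    show "within_dist (tree_graph ps) r a u" .
  qed
  from diameter_le_if_centre[OF _ a this] show ?thesis
    by simp
qed

fun edge_key :: "nat \<times> nat \<Rightarrow> nat \<times> nat" where
  "edge_key (a, b) = (min a b, max a b)"

lemma uedge_edge_key: "uedge (edge_key e) = uedge e"
  by (cases e) (auto simp: min_def max_def)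

definition relabels :: "nat list \<Rightarrow> nat list \<Rightarrow> nat list \<Rightarrow> bool" where
  "relabels p ps qs \<longleftrightarrow> length qs = length ps \<and> sort p = [0..<Suc (length ps)] \<and>
     set (map (edge_key \<circ> map_prod ((!) p) ((!) p)) (tree_edges ps)) = set (map edge_key (tree_edges qs))"

lemma iso_betw_if_relabels:
  assumes "is_parent_list ps" "relabels p ps qs"
  shows "iso_betw ((!) p) (tree_graph ps) (tree_graph qs)"
proof -
  have len: "length qs = length ps" and sorted: "sort p = [0..<Suc (length ps)]"
    and keys: "set (map (edge_key \<circ> map_prod ((!) p) ((!) p)) (tree_edges ps)) =
      set (map edge_key (tree_edges qs))"
    using assms(2) unfolding relabels_def by (simp_all only:)
  have "distinct p"
    using arg_cong[OF sorted, of distinct] by simp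
  moreover have "{..<Suc (length ps)} = {..<length p}"
    using arg_cong[OF sorted, of length] by simp
  moreover have "{..<Suc (length ps)} = set p"
    using arg_cong[OF sorted, of set] by (simp add: atLeast0LessThan lessThan_Suc)
  ultimately have "bij_betw ((!) p) {..<Suc (length ps)} {..<Suc (length ps)}"
    by (rule bij_betw_nth)
  then have bij: "bij_betw ((!) p) (verts (tree_graph ps)) (verts (tree_graph qs))"
    using len by (simp add: atLeast0AtMost lessThan_Suc_atMost)
  have relabel: "image ((!) p) (uedge e) = uedge (edge_key (map_prod ((!) p) ((!) p) e))" for e
    using uedge_edge_key[of "map_prod ((!) p) ((!) p) e"] by (cases e) simp
  have "image ((!) p) ` edges (tree_graph ps) =
      uedge ` set (map (edge_key \<circ> map_prod ((!) p) ((!) p)) (tree_edges ps))"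
    unfolding edges_tree_graph_tree_edges image_image relabel by (simp add: image_image)
  also have "\<dots> = uedge ` set (tree_edges qs)"
    unfolding keys by (simp add: image_image uedge_edge_key)
  finally show ?thesis
    using bij tree_graph_edges_subset[OF assms(1)] edges_tree_graph_tree_edges[of qs]
    unfolding iso_betw_def by simp
qed

section \<open>The finite case analysis\<close>

text \<open>The table was found by an exhaustive search outside the prover and is only checked here.
  It has an entry for each of the 102 admissible parameter triples: either a centre whose ball
  of radius 3 is everything, or a relabelling onto \<^term>\<open>chain_parents 2 5 8\<close>.\<close>

datatype certificate = Isomorphism "nat list" | Centre nat

fun certifies :: "nat list \<Rightarrow> certificate \<Rightarrow> bool" where
  "certifies ps (Isomorphism p) \<longleftrightarrow> relabels p ps (chain_parents 2 5 8)"
| "certifies ps (Centre c) \<longleftrightarrow> set (ball (tree_edges ps) 3 c) = set [0..<Suc (length ps)]"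

definition certificates :: "((nat \<times> nat \<times> nat) \<times> certificate) list" where
  "certificates =
  [((0, 0, 2), Centre 1), ((0, 0, 3), Centre 1),
   ((0, 0, 5), Centre 4), ((0, 0, 6), Centre 4),
   ((0, 0, 8), Centre 7), ((0, 0, 9), Centre 7),
   ((0, 2, 0), Centre 1), ((0, 2, 2), Centre 1),
   ((0, 2, 3), Centre 1), ((0, 2, 5), Isomorphism [5,4,2,6,7,8,9,1,0,3,10,11,12]),
   ((0, 2, 6), Isomorphism [5,4,2,6,7,9,8,1,0,3,10,11,12]), ((0, 2, 8), Isomorphism [2,4,5,6,1,0,3,7,8,9,10,11,12]),
   ((0, 2, 9), Isomorphism [2,4,5,6,1,0,3,7,9,8,10,11,12]), ((0, 3, 0), Centre 1),
   ((0, 3, 2), Centre 1), ((0, 3, 3), Centre 1),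
   ((0, 3, 5), Isomorphism [5,4,6,2,7,8,9,1,0,3,10,11,12]), ((0, 3, 6), Isomorphism [5,4,6,2,7,9,8,1,0,3,10,11,12]),
   ((0, 3, 8), Isomorphism [2,4,6,5,1,0,3,7,8,9,10,11,12]), ((0, 3, 9), Isomorphism [2,4,6,5,1,0,3,7,9,8,10,11,12]),
   ((0, 5, 0), Centre 4), ((0, 5, 2), Isomorphism [5,4,2,6,7,8,9,10,11,12,1,0,3]),
   ((0, 5, 3), Isomorphism [5,4,6,2,7,8,9,10,11,12,1,0,3]), ((0, 5, 5), Centre 4),
   ((0, 5, 6), Centre 4), ((0, 5, 8), Isomorphism [2,1,0,3,4,5,6,7,8,9,10,11,12]),
   ((0, 5, 9), Isomorphism [2,1,0,3,4,5,6,7,9,8,10,11,12]), ((0, 6, 0), Centre 4),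
   ((0, 6, 2), Isomorphism [5,4,2,6,7,9,8,10,11,12,1,0,3]), ((0, 6, 3), Isomorphism [5,4,6,2,7,9,8,10,11,12,1,0,3]),
   ((0, 6, 5), Centre 4), ((0, 6, 6), Centre 4),
   ((0, 6, 8), Isomorphism [2,1,0,3,4,6,5,7,8,9,10,11,12]), ((0, 6, 9), Isomorphism [2,1,0,3,4,6,5,7,9,8,10,11,12]),
   ((2, 0, 0), Centre 1), ((2, 0, 2), Centre 1),
   ((2, 0, 3), Centre 1), ((2, 0, 5), Isomorphism [2,4,5,6,7,8,9,1,0,3,10,11,12]),
   ((2, 0, 6), Isomorphism [2,4,5,6,7,9,8,1,0,3,10,11,12]), ((2, 0, 8), Isomorphism [5,4,2,6,1,0,3,7,8,9,10,11,12]),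
   ((2, 0, 9), Isomorphism [5,4,2,6,1,0,3,7,9,8,10,11,12]), ((2, 2, 0), Centre 1),
   ((2, 2, 3), Centre 1), ((2, 2, 5), Centre 4),
   ((2, 2, 6), Centre 4), ((2, 2, 8), Centre 7),
   ((2, 2, 9), Centre 7), ((2, 3, 0), Centre 1),
   ((2, 3, 2), Centre 1), ((2, 3, 3), Centre 1),
   ((2, 3, 5), Isomorphism [6,4,5,2,7,8,9,1,0,3,10,11,12]), ((2, 3, 6), Isomorphism [6,4,5,2,7,9,8,1,0,3,10,11,12]),
   ((2, 3, 8), Isomorphism [6,4,2,5,1,0,3,7,8,9,10,11,12]), ((2, 3, 9), Isomorphism [6,4,2,5,1,0,3,7,9,8,10,11,12]),
   ((2, 5, 0), Isomorphism [2,4,5,6,7,8,9,10,11,12,1,0,3]), ((2, 5, 2), Centre 4),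
   ((2, 5, 3), Isomorphism [6,4,5,2,7,8,9,10,11,12,1,0,3]), ((2, 5, 5), Centre 4),
   ((2, 5, 6), Centre 4), ((2, 5, 8), Isomorphism [0,1,2,3,4,5,6,7,8,9,10,11,12]),
   ((2, 5, 9), Isomorphism [0,1,2,3,4,5,6,7,9,8,10,11,12]), ((2, 6, 0), Isomorphism [2,4,5,6,7,9,8,10,11,12,1,0,3]),
   ((2, 6, 2), Centre 4), ((2, 6, 3), Isomorphism [6,4,5,2,7,9,8,10,11,12,1,0,3]),
   ((2, 6, 5), Centre 4), ((2, 6, 6), Centre 4),
   ((2, 6, 8), Isomorphism [0,1,2,3,4,6,5,7,8,9,10,11,12]), ((2, 6, 9), Isomorphism [0,1,2,3,4,6,5,7,9,8,10,11,12]),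
   ((3, 0, 0), Centre 1), ((3, 0, 2), Centre 1),
   ((3, 0, 3), Centre 1), ((3, 0, 5), Isomorphism [2,4,6,5,7,8,9,1,0,3,10,11,12]),
   ((3, 0, 6), Isomorphism [2,4,6,5,7,9,8,1,0,3,10,11,12]), ((3, 0, 8), Isomorphism [5,4,6,2,1,0,3,7,8,9,10,11,12]),
   ((3, 0, 9), Isomorphism [5,4,6,2,1,0,3,7,9,8,10,11,12]), ((3, 2, 0), Centre 1),
   ((3, 2, 2), Centre 1), ((3, 2, 3), Centre 1),
   ((3, 2, 5), Isomorphism [6,4,2,5,7,8,9,1,0,3,10,11,12]), ((3, 2, 6), Isomorphism [6,4,2,5,7,9,8,1,0,3,10,11,12]),
   ((3, 2, 8), Isomorphism [6,4,5,2,1,0,3,7,8,9,10,11,12]), ((3, 2, 9), Isomorphism [6,4,5,2,1,0,3,7,9,8,10,11,12]),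
   ((3, 3, 0), Centre 1), ((3, 3, 2), Centre 1),
   ((3, 3, 5), Centre 4), ((3, 3, 6), Centre 4),
   ((3, 3, 8), Centre 7), ((3, 3, 9), Centre 7),
   ((3, 5, 0), Isomorphism [2,4,6,5,7,8,9,10,11,12,1,0,3]), ((3, 5, 2), Isomorphism [6,4,2,5,7,8,9,10,11,12,1,0,3]),
   ((3, 5, 3), Centre 4), ((3, 5, 5), Centre 4),
   ((3, 5, 6), Centre 4), ((3, 5, 8), Isomorphism [0,1,3,2,4,5,6,7,8,9,10,11,12]),
   ((3, 5, 9), Isomorphism [0,1,3,2,4,5,6,7,9,8,10,11,12]), ((3, 6, 0), Isomorphism [2,4,6,5,7,9,8,10,11,12,1,0,3]),
   ((3, 6, 2), Isomorphism [6,4,2,5,7,9,8,10,11,12,1,0,3]), ((3, 6, 3), Centre 4),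
   ((3, 6, 5), Centre 4), ((3, 6, 6), Centre 4),
   ((3, 6, 8), Isomorphism [0,1,3,2,4,6,5,7,8,9,10,11,12]), ((3, 6, 9), Isomorphism [0,1,3,2,4,6,5,7,9,8,10,11,12])]"

lemma certificates_complete:
  "map fst certificates = [(v0, v1, v2). v0 \<leftarrow> [0..<4], v1 \<leftarrow> [0..<7], v2 \<leftarrow> [0..<10],
     \<forall>x\<in>set [0..<13]. tree_degree (chain_parents v0 v1 v2) x \<le> 3]"
  by code_simp

lemma certificates_valid:
  "\<forall>((v0, v1, v2), c) \<in> set certificates. certifies (chain_parents v0 v1 v2) c"
  by code_simp

lemma chain_tree_iso_betw_reference:
  assumes "v0 \<le> 3" "v1 \<le> 6" "v2 \<le> 9"
    and "max_degree_le (tree_graph (chain_parents v0 v1 v2)) 3"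
    and "diameter (tree_graph (chain_parents v0 v1 v2)) = 8"
  shows "\<exists>p. iso_betw p (tree_graph (chain_parents v0 v1 v2)) (tree_graph (chain_parents 2 5 8))"
proof -
  let ?ps = "chain_parents v0 v1 v2"
  have ps: "is_parent_list ?ps"
    using assms(1-3) by (rule is_parent_list_chain_parents)
  have "length ?ps = 12"
    by (simp add: chain_parents_def)
  then have "\<forall>x\<in>set [0..<13]. tree_degree ?ps x \<le> 3"
    using assms(4) unfolding max_degree_le_tree_graph[OF ps] by simp
  with assms(1-3) have "(v0, v1, v2) \<in> set (map fst certificates)"
    unfolding certificates_complete by (simp del: upt_Suc)
  then obtain e where e: "e \<in> set certificates" "fst e = (v0, v1, v2)"
    by auto
  obtain c where "((v0, v1, v2), c) \<in> set certificates"
    using e by (metis prod.collapse)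
  from bspec[OF certificates_valid this] have cert: "certifies ?ps c"
    by simp
  show ?thesis
  proof (cases c)
    case (Isomorphism p)
    with cert have "relabels p ?ps (chain_parents 2 5 8)"
      by (simp only: certifies.simps)
    show ?thesis
    proof
      show "iso_betw ((!) p) (tree_graph ?ps) (tree_graph (chain_parents 2 5 8))"
        using iso_betw_if_relabels[OF ps] \<open>relabels p ?ps (chain_parents 2 5 8)\<close> .
    qed
  next
    case (Centre a)
    with cert have "set (ball (tree_edges ?ps) 3 a) = set [0..<Suc (length ?ps)]"
      by (simp only: certifies.simps)
    then have "set (ball (tree_edges ?ps) 3 a) = verts (tree_graph ?ps)"
      by (simp only: verts_tree_graph set_upt atLeastLessThanSuc_atLeastAtMost)
    from diameter_tree_graph_le[OF ps this] assms(5) show ?thesis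
      by simp
  qed
qed

lemma star_chain3_iso_betw_reference:
  assumes "star_chain3 G" "max_degree_le G 3" "diameter G = 8"
  shows "\<exists>k. iso_betw k G (tree_graph (chain_parents 2 5 8))"
proof -
  obtain v0 v1 v2 h where bounds: "v0 \<le> 3" "v1 \<le> 6" "v2 \<le> 9"
    and h: "iso_betw h G (tree_graph (chain_parents v0 v1 v2))"
    using star_chain3_iso_betw_tree_graph[OF assms(1)] .
  have "max_degree_le (tree_graph (chain_parents v0 v1 v2)) 3"
    using max_degree_le_iso_betw[OF h assms(2)] .
  moreover have "diameter (tree_graph (chain_parents v0 v1 v2)) = 8"
    unfolding diameter_iso_betw[OF h] by (rule assms(3))
  ultimately have "\<exists>p. iso_betw p (tree_graph (chain_parents v0 v1 v2)) (tree_graph (chain_parents 2 5 8))"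
    by (rule chain_tree_iso_betw_reference[OF bounds])
  then obtain p where
    "iso_betw p (tree_graph (chain_parents v0 v1 v2)) (tree_graph (chain_parents 2 5 8))"
    by blast
  from iso_betw_comp[OF h this] show ?thesis
    by blast
qed

theorem mainTheorem14:
  fixes Z :: "'a graph" and Z' :: "'b graph"
  assumes "star_chain3 Z" and "max_degree_le Z 3" and "diameter Z = 8"
      and "star_chain3 Z'" and "max_degree_le Z' 3" and "diameter Z' = 8"
  shows "graph_iso Z Z'"
proof -
  obtain k where k: "iso_betw k Z (tree_graph (chain_parents 2 5 8))"
    using star_chain3_iso_betw_reference[OF assms(1-3)] by (elim exE)
  obtain k' where k': "iso_betw k' Z' (tree_graph (chain_parents 2 5 8))"
    using star_chain3_iso_betw_reference[OF assms(4-6)] by (elim exE)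
  show ?thesis
    using graph_iso_if_iso_betw[OF iso_betw_comp[OF k iso_betw_inv[OF k']]] .
qed

end
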